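(* Let $K\subseteq\mathbb{R}^n$ be a proper cone and let $A\in\mathbb{R}^{n\times n}$ be $K$-monotone. Let $A=U-V$ be a $K$-regular splitting and let $U=F-G$ be a $K$-weak regular splitting of type II such that $VF^{-1}G=GF^{-1}V$. Fix a positive integer $s$ and let $$T_{s}=(F^{-1}G)^{s}+\sum_{j=0}^{s-1}(F^{-1}G)^{j}F^{-1}V,\qquad \widehat{T}_{s}=(GF^{-1})^{s}+\sum_{j=0}^{s-1}(GF^{-1})^{j}VF^{-1}.$$ Then $T_s$ and $\widehat T_s$ induce the same splitting $A=B-C$, where $B=A(I-T_s)^{-1}$ and $C=B-A$ (so $T_s=B^{-1}C$); that is, $X:=(I-\widehat{T}_s)^{-1}A$ equals $B$, and with $Y:=X-A$ one has $\widehat T_s = YX^{-1}$. Further, $A=X-Y$ is the unique splitting of $A$ with $\widehat T_s=YX^{-1}$, and it is a $K$-weak regular splitting of type II.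
   Context: A proper cone $K\subseteq\mathbb{R}^n$ is a closed, convex, pointed, solid cone. For $M\in\mathbb{R}^{n\times n}$, $M\geq_K 0$ means $MK\subseteq K$. A matrix $A$ is $K$-monotone if $A$ is nonsingular and $A^{-1}\geq_K 0$. A splitting $A=U-V$ (with $U$ nonsingular) is $K$-regular if $U^{-1}\geq_K 0$ and $V\geq_K 0$; it is a $K$-weak regular splitting of type II if $U^{-1}\geq_K 0$ and $VU^{-1}\geq_K 0$. A splitting $A=X-Y$ is said to be induced by a matrix $T$ if $T=X^{-1}Y$ (respectively, for type II considerations, $T=YX^{-1}$). *)

theory Defs
  imports "HOL-Analysis.Analysis"
begin

definition proper_cone :: "(real ^ 'n) set \<Rightarrow> bool" where
  "proper_cone K \<longleftrightarrow> cone K \<and> closed K \<and> convex K \<and>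
     K \<inter> uminus ` K = {0} \<and> interior K \<noteq> {}"

definition K_nonneg :: "(real ^ 'n) set \<Rightarrow> real ^ 'n ^ 'n \<Rightarrow> bool" where
  "K_nonneg K M \<longleftrightarrow> (\<forall>x\<in>K. M *v x \<in> K)"

definition K_monotone :: "(real ^ 'n) set \<Rightarrow> real ^ 'n ^ 'n \<Rightarrow> bool" where
  "K_monotone K A \<longleftrightarrow> invertible A \<and> K_nonneg K (matrix_inv A)"

definition K_regular_splitting ::
  "(real ^ 'n) set \<Rightarrow> real ^ 'n ^ 'n \<Rightarrow> real ^ 'n ^ 'n \<Rightarrow> real ^ 'n ^ 'n \<Rightarrow> bool" where
  "K_regular_splitting K A U V \<longleftrightarrow> A = U - V \<and> invertible U \<and>
     K_nonneg K (matrix_inv U) \<and> K_nonneg K V"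

definition K_weak_regular_splitting_II ::
  "(real ^ 'n) set \<Rightarrow> real ^ 'n ^ 'n \<Rightarrow> real ^ 'n ^ 'n \<Rightarrow> real ^ 'n ^ 'n \<Rightarrow> bool" where
  "K_weak_regular_splitting_II K A U V \<longleftrightarrow> A = U - V \<and> invertible U \<and>
     K_nonneg K (matrix_inv U) \<and> K_nonneg K (V ** matrix_inv U)"

definition mpow :: "real ^ 'n ^ 'n \<Rightarrow> nat \<Rightarrow> real ^ 'n ^ 'n" where
  "mpow M k = ((\<lambda>X. M ** X) ^^ k) (mat 1)"

end

theory Submission
  imports Defs
begin

(* Put N = F^-1 (I + GF^-1 + ... + (GF^-1)^(s-1)), the truncated Neumann series of U^-1.
   Telescoping gives N U = I - (F^-1 G)^s and U N = I - (GF^-1)^s; with the commutation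
   hypothesis this yields T_s = I - N A and T^_s = I - A N, so B = X = N^-1 and both iteration
   matrices are induced by A = N^-1 - (N^-1 - A), which is weak regular of type II because
   N and T^_s are K-nonnegative.  The one analytic point is that N is invertible, i.e. that 1 is
   not an eigenvalue of (GF^-1)^s: the partial sums of the series F^-1 (GF^-1)^j are bounded
   by U^-1 in the order of K, so a functional strictly positive on the pointed cone K makes the
   series absolutely summable on K, hence on K - K = R^n, and (GF^-1)^j tends to 0. *)

lemma matrix_diff_ldistrib: "(A::'a::ring_1^'n^'m) ** (B - C) = A ** B - A ** C"
  by (metis add_diff_cancel diff_add_cancel matrix_add_ldistrib)

lemma matrix_add_rdistrib: "((A::'a::semiring_1^'n^'m) + B) ** C = A ** C + B ** C"
  by (vector matrix_matrix_mult_def sum.distrib[symmetric] field_simps)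

lemma matrix_diff_rdistrib: "((A::'a::ring_1^'n^'m) - B) ** C = A ** C - B ** C"
  by (metis add_diff_cancel diff_add_cancel matrix_add_rdistrib)

lemma matrix_mul_sum_left: "(\<Sum>j\<in>S. f j) ** (C::'a::semiring_1^'p^'n) = (\<Sum>j\<in>S. f j ** C)"
  using sum_comp_morphism[of "\<lambda>X. X ** C" f S] by (simp add: matrix_add_rdistrib o_def)

lemma matrix_mul_sum_right: "(C::'a::semiring_1^'n^'m) ** (\<Sum>j\<in>S. f j) = (\<Sum>j\<in>S. C ** f j)"
  using sum_comp_morphism[of "\<lambda>X. C ** X" f S] by (simp add: matrix_add_ldistrib o_def)

lemma matrix_vector_mult_sum_left: "(\<Sum>j\<in>S. f j) *v (x::'a::semiring_1^'n) = (\<Sum>j\<in>S. f j *v x)"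
  using sum_comp_morphism[of "\<lambda>M. M *v x" f S] by (simp add: matrix_vector_mult_add_rdistrib o_def)

lemma matrix_inv_left: "invertible (A::'a::semiring_1^'n^'n) \<Longrightarrow> matrix_inv A ** A = mat 1"
  and matrix_inv_right: "invertible (A::'a::semiring_1^'n^'n) \<Longrightarrow> A ** matrix_inv A = mat 1"
  unfolding invertible_def matrix_inv_def by (metis (mono_tags, lifting) someI_ex)+

lemma matrix_inv_unique: "(A::'a::field^'n^'n) ** B = mat 1 \<Longrightarrow> matrix_inv A = B"
  by (metis invertible_right_inverse matrix_inv_left matrix_mul_assoc matrix_mul_lid matrix_mul_rid)

lemma invertible_matrix_inv: "invertible (A::'a::semiring_1^'n^'n) \<Longrightarrow> invertible (matrix_inv A)"
  using invertible_def matrix_inv_left matrix_inv_right by blast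

lemma matrix_inv_matrix_inv: "invertible (A::'a::field^'n^'n) \<Longrightarrow> matrix_inv (matrix_inv A) = A"
  by (simp add: matrix_inv_left matrix_inv_unique)

lemma matrix_inv_mult:
  fixes A B :: "'a::field^'n^'n"
  assumes "invertible A" "invertible B"
  shows "matrix_inv (A ** B) = matrix_inv B ** matrix_inv A"
proof (rule matrix_inv_unique)
  have "A ** B ** (matrix_inv B ** matrix_inv A) = A ** (B ** matrix_inv B) ** matrix_inv A"
    by (simp add: matrix_mul_assoc)
  then show "A ** B ** (matrix_inv B ** matrix_inv A) = mat 1"
    using assms by (simp add: matrix_inv_right)
qed

lemma mpow_0 [simp]: "mpow M 0 = mat 1"
  by (simp add: mpow_def)

lemma mpow_Suc: "mpow M (Suc k) = M ** mpow M k"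
  by (simp add: mpow_def)

lemma mpow_add: "mpow M (m + n) = mpow M m ** mpow M n"
  by (induction m) (simp_all add: mpow_Suc matrix_mul_assoc)

lemma mpow_Suc': "mpow M (Suc k) = mpow M k ** M"
  using mpow_add[of M k 1] by (simp add: mpow_Suc)

lemma mpow_mult: "mpow M (m * n) = mpow (mpow M m) n"
  by (induction n) (simp_all add: mpow_Suc mpow_add)

lemma mpow_commute:
  assumes "M ** N = N ** P"
  shows "mpow M k ** N = N ** mpow P k"
proof (induction k)
  case (Suc k)
  have "mpow M (Suc k) ** N = M ** (mpow M k ** N)"
    by (simp add: mpow_Suc matrix_mul_assoc)
  also have "\<dots> = (M ** N) ** mpow P k"
    by (simp add: Suc matrix_mul_assoc)
  also have "\<dots> = N ** mpow P (Suc k)"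
    by (simp add: assms mpow_Suc matrix_mul_assoc)
  finally show ?case .
qed simp

lemma mpow_geometric_sum_left: "(mat 1 - M) ** (\<Sum>j<m. mpow M j) = mat 1 - mpow M m"
  by (induction m) (simp_all add: matrix_add_ldistrib matrix_diff_rdistrib mpow_Suc)

lemma mpow_geometric_sum_right: "(\<Sum>j<m. mpow M j) ** (mat 1 - M) = mat 1 - mpow M m"
proof (induction m)
  case (Suc m)
  have "(\<Sum>j<Suc m. mpow M j) ** (mat 1 - M)
      = (\<Sum>j<m. mpow M j) ** (mat 1 - M) + mpow M m ** (mat 1 - M)"
    by (simp add: matrix_add_rdistrib)
  also have "\<dots> = mat 1 - mpow M (Suc m)"
    using Suc by (simp add: matrix_diff_ldistrib mpow_Suc')
  finally show ?case .
qed simp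

lemma proper_cone_convex_cone: "proper_cone K \<Longrightarrow> convex_cone K"
  unfolding proper_cone_def convex_cone_def conic_def cone_def
  using interior_subset by fastforce

lemma convex_cone_sum:
  assumes "convex_cone K" "\<And>i. i \<in> S \<Longrightarrow> f i \<in> K"
  shows "sum f S \<in> K"
  using assms(2)
  by (induction S rule: infinite_finite_induct)
    (auto simp: assms(1) convex_cone_add convex_cone_contains_0)

lemma K_nonneg_mat_1: "K_nonneg K (mat 1)"
  by (simp add: K_nonneg_def)

lemma K_nonneg_mult: "K_nonneg K M \<Longrightarrow> K_nonneg K N \<Longrightarrow> K_nonneg K (M ** N)"
  by (simp add: K_nonneg_def matrix_vector_mul_assoc[symmetric])

lemma K_nonneg_mpow: "K_nonneg K M \<Longrightarrow> K_nonneg K (mpow M k)"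
  by (induction k) (simp_all add: K_nonneg_mat_1 mpow_Suc K_nonneg_mult)

lemma K_nonneg_add:
  "convex_cone K \<Longrightarrow> K_nonneg K M \<Longrightarrow> K_nonneg K N \<Longrightarrow> K_nonneg K (M + N)"
  by (simp add: K_nonneg_def matrix_vector_mult_add_rdistrib convex_cone_add)

lemma K_nonneg_sum:
  "convex_cone K \<Longrightarrow> (\<And>j. j \<in> S \<Longrightarrow> K_nonneg K (f j)) \<Longrightarrow> K_nonneg K (sum f S)"
  by (simp add: K_nonneg_def matrix_vector_mult_sum_left convex_cone_sum)

lemma pointed_cone_positive_functional:
  fixes K :: "'a::euclidean_space set"
  assumes cone: "convex_cone K" and "closed K" and pointed: "K \<inter> uminus ` K = {0}"
  obtains a b where "b > 0" "\<And>k. k \<in> K \<Longrightarrow> b * norm k \<le> a \<bullet> k"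
proof -
  define C where "C = convex hull (K \<inter> sphere 0 1)"
  have "closed C"
    unfolding C_def using \<open>closed K\<close>
    by (simp add: closed_Int_compact compact_convex_hull compact_imp_closed)
  moreover have "0 \<notin> C"
  proof
    assume "0 \<in> C"
    then obtain S u where S: "finite S" "S \<subseteq> K \<inter> sphere 0 1" "\<forall>x\<in>S. 0 \<le> u x"
        "sum u S = 1" "(\<Sum>v\<in>S. u v *\<^sub>R v) = 0"
      unfolding C_def convex_hull_explicit by blast
    obtain v where v: "v \<in> S" "u v > 0"
    proof (rule ccontr)
      assume "\<not> thesis"
      with that have "\<forall>v\<in>S. u v \<le> 0"
        by force
      then show False
        using S(4) sum_nonpos[of S u] by simp
    qed
    have "u v *\<^sub>R v = - (\<Sum>w\<in>S - {v}. u w *\<^sub>R w)"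
      using S(5) sum.remove[OF S(1) v(1), of "\<lambda>w. u w *\<^sub>R w"] by (simp add: eq_neg_iff_add_eq_0)
    moreover have "(\<Sum>w\<in>S - {v}. u w *\<^sub>R w) \<in> K" and "u v *\<^sub>R v \<in> K"
      using S(2,3) v cone by (auto intro!: convex_cone_sum convex_cone_scaleR)
    ultimately have "u v *\<^sub>R v \<in> K \<inter> uminus ` K"
      by blast
    then have "v = 0"
      using pointed v(2) by simp
    then show False
      using S(2) v(1) by auto
  qed
  moreover have "convex C"
    unfolding C_def by simp
  ultimately obtain a b where ab: "0 < b" "\<forall>x\<in>C. b < a \<bullet> x"
    using separating_hyperplane_closed_0 by blast
  have "b * norm k \<le> a \<bullet> k" if "k \<in> K" for k
  proof (cases "k = 0")
    case False
    then have "(1 / norm k) *\<^sub>R k \<in> K \<inter> sphere 0 1"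
      using that cone by (simp add: convex_cone_scaleR)
    then have "(1 / norm k) *\<^sub>R k \<in> C"
      unfolding C_def by (rule hull_inc)
    then have "b < (a \<bullet> k) / norm k"
      using ab(2) by (auto simp: inner_scaleR_right)
    then show ?thesis
      using False by (simp add: field_simps)
  qed simp
  then show thesis
    using that ab(1) by blast
qed

lemma solid_cone_spanning:
  fixes K :: "'a::real_normed_vector set"
  assumes "convex_cone K" "interior K \<noteq> {}"
  obtains p q where "p \<in> K" "q \<in> K" "x = p - q"
proof (cases "x = 0")
  case True
  then show thesis
    using that assms(1) convex_cone_contains_0 by fastforce
next
  case False
  obtain y where "y \<in> interior K"
    using assms(2) by blast
  then obtain e where "e > 0" "ball y e \<subseteq> K"
    using mem_interior by blast
  define d where "d = e / (2 * norm x)"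
  have "d > 0"
    using \<open>e > 0\<close> False by (simp add: d_def)
  have "dist y (y + d *\<^sub>R x) < e"
    using \<open>e > 0\<close> False by (simp add: dist_norm d_def)
  then have "y + d *\<^sub>R x \<in> K" "y \<in> K"
    using \<open>e > 0\<close> \<open>ball y e \<subseteq> K\<close> by auto
  then have "(1 / d) *\<^sub>R (y + d *\<^sub>R x) \<in> K" "(1 / d) *\<^sub>R y \<in> K"
    using assms(1) \<open>d > 0\<close> by (simp_all add: convex_cone_scaleR)
  moreover have "x = (1 / d) *\<^sub>R (y + d *\<^sub>R x) - (1 / d) *\<^sub>R y"
    using \<open>d > 0\<close> by (simp add: scaleR_add_right)
  ultimately show thesis
    using that by blast
qed

section \<open>Powers of a K-nonnegative matrix with K-bounded series\<close>

lemma cone_bounded_partial_sums_summable_norm: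
  fixes K :: "'a::euclidean_space set"
  assumes "convex_cone K" "closed K" "K \<inter> uminus ` K = {0}"
    and terms: "\<And>j. y j \<in> K" and bound: "\<And>m. c - (\<Sum>j<m. y j) \<in> K"
  shows "summable (\<lambda>j. norm (y j))"
proof -
  obtain a b where ab: "b > 0" "\<And>k. k \<in> K \<Longrightarrow> b * norm k \<le> a \<bullet> k"
    using pointed_cone_positive_functional[OF assms(1-3)] by metis
  have "(\<Sum>j<m. norm (y j)) \<le> (a \<bullet> c) / b" for m
  proof -
    have "b * (\<Sum>j<m. norm (y j)) \<le> (\<Sum>j<m. a \<bullet> y j)"
      using ab(2)[OF terms] by (simp add: sum_distrib_left sum_mono)
    also have "\<dots> = a \<bullet> (\<Sum>j<m. y j)"
      by (simp add: inner_sum_right)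
    also have "\<dots> \<le> a \<bullet> c"
    proof -
      have "0 \<le> b * norm (c - (\<Sum>j<m. y j))"
        using ab(1) by simp
      also have "\<dots> \<le> a \<bullet> (c - (\<Sum>j<m. y j))"
        using ab(2)[OF bound] .
      finally show ?thesis
        by (simp add: inner_diff_right)
    qed
    finally show ?thesis
      using ab(1) by (simp add: field_simps)
  qed
  then show ?thesis
    by (intro summableI_nonneg_bounded[where x = "(a \<bullet> c) / b"]) simp_all
qed

lemma mpow_tendsto_zero_if_K_bounded_partial_sums:
  assumes "proper_cone K" "K_nonneg K M" "K_nonneg K L" "invertible L"
    and "\<And>m. K_nonneg K (R - (\<Sum>j<m. L ** mpow M j))"
  shows "(\<lambda>j. mpow M j *v x) \<longlonglongrightarrow> 0"
proof -
  have K: "convex_cone K" "closed K" "K \<inter> uminus ` K = {0}" "interior K \<noteq> {}"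
    using assms(1) proper_cone_convex_cone unfolding proper_cone_def by blast+
  have summable_on_K: "summable (\<lambda>j. norm ((L ** mpow M j) *v p))" if "p \<in> K" for p
  proof (rule cone_bounded_partial_sums_summable_norm[OF K(1-3)])
    show "(L ** mpow M j) *v p \<in> K" for j
      using K_nonneg_mult[OF assms(3) K_nonneg_mpow[OF assms(2)]] that
      unfolding K_nonneg_def by blast
    show "R *v p - (\<Sum>j<m. (L ** mpow M j) *v p) \<in> K" for m
      using assms(5)[of m] that unfolding K_nonneg_def
      by (simp add: matrix_vector_mult_diff_rdistrib matrix_vector_mult_sum_left)
  qed
  obtain p q where pq: "p \<in> K" "q \<in> K" "x = p - q"
    using solid_cone_spanning[OF K(1) K(4)] by blast
  have "summable (\<lambda>j. norm ((L ** mpow M j) *v x))"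
  proof (rule summable_comparison_test')
    show "summable (\<lambda>j. norm ((L ** mpow M j) *v p) + norm ((L ** mpow M j) *v q))"
      using pq by (intro summable_add summable_on_K)
    show "norm (norm ((L ** mpow M j) *v x))
        \<le> norm ((L ** mpow M j) *v p) + norm ((L ** mpow M j) *v q)" for j
      by (simp add: pq(3) matrix_vector_mult_diff_distrib norm_triangle_ineq4)
  qed
  then have "(\<lambda>j. (L ** mpow M j) *v x) \<longlonglongrightarrow> 0"
    by (rule tendsto_norm_zero_cancel[OF summable_LIMSEQ_zero])
  then have "(\<lambda>j. matrix_inv L *v ((L ** mpow M j) *v x)) \<longlonglongrightarrow> matrix_inv L *v 0"
    by (intro bounded_linear.tendsto[OF matrix_vector_mul_bounded_linear])
  moreover have "matrix_inv L *v ((L ** mpow M j) *v x) = mpow M j *v x" for j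
    using assms(4) by (simp add: matrix_vector_mul_assoc matrix_mul_assoc matrix_inv_left)
  ultimately show ?thesis
    by simp
qed

lemma invertible_id_minus_mpow:
  fixes M :: "real^'n^'n"
  assumes "\<And>x. (\<lambda>j. mpow M j *v x) \<longlonglongrightarrow> 0" and "s > 0"
  shows "invertible (mat 1 - mpow M s)"
proof -
  have "x = 0" if "(mat 1 - mpow M s) *v x = 0" for x
  proof -
    have fixed: "mpow M s *v x = x"
      using that by (simp add: matrix_vector_mult_diff_rdistrib)
    have "mpow (mpow M s) k *v x = x" for k
      by (induction k) (simp_all add: mpow_Suc fixed flip: matrix_vector_mul_assoc)
    then have "mpow M (s * k) *v x = x" for k
      by (simp add: mpow_mult)
    moreover have "(\<lambda>k. mpow M (s * k) *v x) \<longlonglongrightarrow> 0"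
      using LIMSEQ_subseq_LIMSEQ[OF assms(1), of "\<lambda>k. s * k"] \<open>s > 0\<close>
      by (simp add: o_def strict_mono_def)
    ultimately show "x = 0"
      by (simp add: LIMSEQ_const_iff)
  qed
  then obtain B where "B ** (mat 1 - mpow M s) = mat 1"
    using matrix_left_invertible_ker by blast
  then show ?thesis
    using invertible_left_inverse by blast
qed

lemma splitting_iteration_left:
  "invertible (B::'a::field^'n^'n) \<Longrightarrow> matrix_inv B ** (B - A) = mat 1 - matrix_inv B ** A"
  by (simp add: matrix_diff_ldistrib matrix_inv_left)

lemma splitting_iteration_right:
  "invertible (X::'a::field^'n^'n) \<Longrightarrow> (X - A) ** matrix_inv X = mat 1 - A ** matrix_inv X"
  by (simp add: matrix_diff_rdistrib matrix_inv_right)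

lemma splitting_unique_by_right_iteration:
  fixes A X N :: "'a::field^'n^'n"
  assumes "invertible A" "invertible X" "(X - A) ** matrix_inv X = mat 1 - A ** N"
  shows "X = matrix_inv N"
proof -
  have "A ** matrix_inv X = A ** N"
    using assms(2,3) by (simp add: splitting_iteration_right)
  then have "matrix_inv A ** A ** matrix_inv X = matrix_inv A ** A ** N"
    by (simp flip: matrix_mul_assoc)
  then have "matrix_inv X = N"
    using assms(1) by (simp add: matrix_inv_left)
  then show ?thesis
    using matrix_inv_matrix_inv[OF assms(2)] by simp
qed

lemma K_weak_regular_splitting_II_matrix_inv:
  assumes "invertible N" "K_nonneg K N" "K_nonneg K (mat 1 - A ** N)"
  shows "K_weak_regular_splitting_II K A (matrix_inv N) (matrix_inv N - A)"
  using assms invertible_matrix_inv[OF assms(1)] splitting_iteration_right[of "matrix_inv N" A]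
  by (simp add: K_weak_regular_splitting_II_def matrix_inv_matrix_inv)

section \<open>Truncated Neumann series of a weak splitting\<close>

definition neumann_partial :: "real^'n^'n \<Rightarrow> real^'n^'n \<Rightarrow> nat \<Rightarrow> real^'n^'n" where
  "neumann_partial F G m = (\<Sum>j<m. matrix_inv F ** mpow (G ** matrix_inv F) j)"

lemma neumann_partial_eq:
  "neumann_partial F G m = (\<Sum>j<m. mpow (matrix_inv F ** G) j ** matrix_inv F)"
  unfolding neumann_partial_def
  using mpow_commute[of "matrix_inv F ** G" "matrix_inv F" "G ** matrix_inv F"]
  by (simp add: matrix_mul_assoc)

lemma mult_neumann_partial:
  assumes "invertible F"
  shows "(F - G) ** neumann_partial F G m = mat 1 - mpow (G ** matrix_inv F) m"
proof -
  have "(F - G) ** neumann_partial F G m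
      = ((F - G) ** matrix_inv F) ** (\<Sum>j<m. mpow (G ** matrix_inv F) j)"
    by (simp add: neumann_partial_def matrix_mul_sum_right matrix_mul_assoc)
  also have "(F - G) ** matrix_inv F = mat 1 - G ** matrix_inv F"
    using assms by (simp add: matrix_diff_rdistrib matrix_inv_right)
  finally show ?thesis
    by (simp add: mpow_geometric_sum_left)
qed

lemma neumann_partial_mult:
  assumes "invertible F"
  shows "neumann_partial F G m ** (F - G) = mat 1 - mpow (matrix_inv F ** G) m"
proof -
  have "neumann_partial F G m ** (F - G)
      = (\<Sum>j<m. mpow (matrix_inv F ** G) j) ** (matrix_inv F ** (F - G))"
    by (simp add: neumann_partial_eq matrix_mul_sum_left matrix_mul_assoc)
  also have "matrix_inv F ** (F - G) = mat 1 - matrix_inv F ** G"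
    using assms by (simp add: matrix_diff_ldistrib matrix_inv_left)
  finally show ?thesis
    by (simp add: mpow_geometric_sum_right)
qed

lemma K_nonneg_neumann_partial:
  "convex_cone K \<Longrightarrow> K_nonneg K (matrix_inv F) \<Longrightarrow> K_nonneg K (G ** matrix_inv F)
    \<Longrightarrow> K_nonneg K (neumann_partial F G m)"
  unfolding neumann_partial_def by (intro K_nonneg_sum K_nonneg_mult[of K "matrix_inv F"] K_nonneg_mpow)

lemma invertible_neumann_partial:
  assumes "proper_cone K" "K_weak_regular_splitting_II K U F G"
    and "invertible U" "K_nonneg K (matrix_inv U)" "m > 0"
  shows "invertible (neumann_partial F G m)"
proof -
  from assms(2) have U: "U = F - G" "invertible F"
    and K_F: "K_nonneg K (matrix_inv F)" "K_nonneg K (G ** matrix_inv F)"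
    unfolding K_weak_regular_splitting_II_def by auto
  have U_neumann: "U ** neumann_partial F G k = mat 1 - mpow (G ** matrix_inv F) k" for k
    using mult_neumann_partial[OF U(2)] U(1) by simp
  have "matrix_inv U - neumann_partial F G k = matrix_inv U ** mpow (G ** matrix_inv F) k" for k
  proof -
    have "matrix_inv U ** mpow (G ** matrix_inv F) k
        = matrix_inv U ** (mat 1 - U ** neumann_partial F G k)"
      by (simp add: U_neumann)
    also have "\<dots> = matrix_inv U - neumann_partial F G k"
      using assms(3) by (simp add: matrix_diff_ldistrib matrix_mul_assoc matrix_inv_left)
    finally show ?thesis ..
  qed
  then have "K_nonneg K (matrix_inv U - (\<Sum>j<k. matrix_inv F ** mpow (G ** matrix_inv F) j))" for k
    using assms(4) K_F(2) by (simp add: K_nonneg_mult K_nonneg_mpow flip: neumann_partial_def)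
  then have "(\<lambda>j. mpow (G ** matrix_inv F) j *v x) \<longlonglongrightarrow> 0" for x
    using assms(1) K_F U(2)
    by (intro mpow_tendsto_zero_if_K_bounded_partial_sums[where L = "matrix_inv F"] invertible_matrix_inv)
  then have "invertible (mat 1 - mpow (G ** matrix_inv F) m)"
    using assms(5) by (rule invertible_id_minus_mpow)
  then have "invertible (matrix_inv U ** (U ** neumann_partial F G m))"
    using assms(3) by (simp add: U_neumann invertible_mult invertible_matrix_inv)
  then show ?thesis
    using assms(3) by (simp add: matrix_mul_assoc matrix_inv_left)
qed

lemma iteration_matrix_eq_left:
  assumes "invertible F"
  shows "mpow (matrix_inv F ** G) s + (\<Sum>j<s. mpow (matrix_inv F ** G) j ** matrix_inv F ** V)
    = mat 1 - neumann_partial F G s ** (F - G - V)"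
proof -
  have "(\<Sum>j<s. mpow (matrix_inv F ** G) j ** matrix_inv F ** V) = neumann_partial F G s ** V"
    by (simp add: neumann_partial_eq matrix_mul_sum_left)
  moreover have "neumann_partial F G s ** (F - G - V)
      = mat 1 - mpow (matrix_inv F ** G) s - neumann_partial F G s ** V"
    using neumann_partial_mult[OF assms] by (simp add: matrix_diff_ldistrib)
  ultimately show ?thesis
    by simp
qed

lemma iteration_matrix_eq_right:
  assumes "invertible F" and "V ** matrix_inv F ** G = G ** matrix_inv F ** V"
  shows "mpow (G ** matrix_inv F) s + (\<Sum>j<s. mpow (G ** matrix_inv F) j ** V ** matrix_inv F)
    = mat 1 - (F - G - V) ** neumann_partial F G s"
proof -
  have "mpow (G ** matrix_inv F) j ** V = V ** mpow (matrix_inv F ** G) j" for j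
    using assms(2) by (intro mpow_commute) (simp add: matrix_mul_assoc)
  then have "(\<Sum>j<s. mpow (G ** matrix_inv F) j ** V ** matrix_inv F) = V ** neumann_partial F G s"
    by (simp add: neumann_partial_eq matrix_mul_sum_right matrix_mul_assoc)
  moreover have "(F - G - V) ** neumann_partial F G s
      = mat 1 - mpow (G ** matrix_inv F) s - V ** neumann_partial F G s"
    using mult_neumann_partial[OF assms(1)] by (simp add: matrix_diff_rdistrib)
  ultimately show ?thesis
    by simp
qed

theorem theorem3p6:
  fixes K :: "(real ^ 'n) set" and A U V F G :: "real ^ 'n ^ 'n" and s :: nat
  assumes "proper_cone K"
    and "K_monotone K A"
    and "K_regular_splitting K A U V"
    and "K_weak_regular_splitting_II K U F G"
    and "V ** matrix_inv F ** G = G ** matrix_inv F ** V"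
    and "s > 0"
  defines "T \<equiv> mpow (matrix_inv F ** G) s
                + (\<Sum>j<s. mpow (matrix_inv F ** G) j ** matrix_inv F ** V)"
    and "Th \<equiv> mpow (G ** matrix_inv F) s
                + (\<Sum>j<s. mpow (G ** matrix_inv F) j ** V ** matrix_inv F)"
  defines "B \<equiv> A ** matrix_inv (mat 1 - T)"
    and "X \<equiv> matrix_inv (mat 1 - Th) ** A"
  shows "invertible (mat 1 - T) \<and> invertible (mat 1 - Th)
    \<and> invertible B \<and> T = matrix_inv B ** (B - A)
    \<and> X = B
    \<and> Th = (X - A) ** matrix_inv X
    \<and> (\<forall>X' Y'. invertible X' \<and> A = X' - Y' \<and> Th = Y' ** matrix_inv X'
           \<longrightarrow> X' = X \<and> Y' = X - A)
    \<and> K_weak_regular_splitting_II K A X (X - A)"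
proof -
  from assms(2-4) have A: "invertible A" "A = F - G - V"
    and U: "invertible U" "K_nonneg K (matrix_inv U)" "K_nonneg K V"
    and F: "invertible F" "K_nonneg K (matrix_inv F)" "K_nonneg K (G ** matrix_inv F)"
    unfolding K_monotone_def K_regular_splitting_def K_weak_regular_splitting_II_def by auto
  define N where "N = neumann_partial F G s"
  have N: "invertible N" "K_nonneg K N"
    using invertible_neumann_partial[OF assms(1,4) U(1,2) assms(6)]
      K_nonneg_neumann_partial[OF proper_cone_convex_cone[OF assms(1)] F(2,3)]
    by (simp_all add: N_def)
  have T_eq: "T = mat 1 - N ** A" and Th_eq: "Th = mat 1 - A ** N"
    using iteration_matrix_eq_left[OF F(1)] iteration_matrix_eq_right[OF F(1) assms(5)]
    by (simp_all add: T_def Th_def N_def A(2))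
  have "K_nonneg K Th"
    unfolding Th_def using proper_cone_convex_cone[OF assms(1)] K_nonneg_mpow[OF F(3)]
    by (simp add: K_nonneg_add K_nonneg_sum K_nonneg_mult F(2) U(3))
  have B_eq: "B = matrix_inv N"
    using A(1) N(1) unfolding B_def T_eq by (simp add: matrix_inv_mult matrix_mul_assoc matrix_inv_right)
  have X_eq: "X = matrix_inv N"
    using A(1) N(1) unfolding X_def Th_eq
    by (simp add: matrix_inv_mult matrix_inv_left flip: matrix_mul_assoc)
  have unique: "\<forall>X' Y'. invertible X' \<and> A = X' - Y' \<and> Th = Y' ** matrix_inv X'
      \<longrightarrow> X' = X \<and> Y' = X - A"
    using splitting_unique_by_right_iteration[OF A(1)] by (auto simp: Th_eq X_eq)
  show ?thesis
    using unique A(1) N K_weak_regular_splitting_II_matrix_inv[OF N] \<open>K_nonneg K Th\<close>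
      splitting_iteration_left[OF invertible_matrix_inv[OF N(1)], of A]
      splitting_iteration_right[OF invertible_matrix_inv[OF N(1)], of A]
    by (simp add: T_eq Th_eq B_eq X_eq invertible_mult invertible_matrix_inv matrix_inv_matrix_inv)
qed

end
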